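(* Let $V_\theta$ be a real vector space of finite dimension $D\ge 1$, and let $M\subset V_\theta\times[0,1]$ be a dichotomous item response hypersurface (IRHS), with associated function $f:V_\theta\to[0,1]$ (so $M=\{(\theta,f(\theta)):\theta\in V_\theta\}$). Then the MIRT model given by $M$ is a trivial extension of a unidimensional IRT model: there exist a linear subspace $H\subset V_\theta$ of dimension $D-1$ and a vector $u\in V_\theta\setminus H$ such that $$f(\mu u+h)=f(\mu u)\quad\text{for all }\mu\in\mathbb{R},\ h\in H.$$ In particular $f$ is determined by the monotonic function $\mu\mapsto f(\mu u)$, $\mathbb{R}\to[0,1]$.
   Context: A dichotomous item response hypersurface (IRHS) is a $D=\dim V_\theta$ dimensional smooth submanifold $M$ of $V_\theta\times[0,1]$ such that for any two vectors $v,w\in V_\theta$, the intersection of $(w+\mathbb{R}\cdot v)\times[0,1]$ with $M$ is the graph of a monotonic function $w+\mathbb{R}\cdot v\to[0,1]$, where $w+\mathbb{R}\cdot v=\{w+\lambda v:\lambda\in\mathbb{R}\}$. A function $g:w+\mathbb{R}\cdot v\to[0,1]$ is called monotonic if either $g(w+\lambda v)\le g(w+\mu v)$ for all $\lambda\le\mu$, or $g(w+\lambda v)\ge g(w+\mu v)$ for all $\lambda\le\mu$. (Taking $v=0$ shows that $M$ is the graph of a function $f:V_\theta\to[0,1]$; $f$ is the function describing $M$.) A MIRT model is given by an IRHS. A unidimensional IRT model is a monotonic item response function $\mathbb{R}\to[0,1]$. *)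

theory Defs
  imports "HOL-Analysis.Analysis"
begin

fun Ck_on :: "nat \<Rightarrow> 'a::euclidean_space set \<Rightarrow> ('a \<Rightarrow> 'b::euclidean_space) \<Rightarrow> bool" where
  "Ck_on 0 S f = continuous_on S f"
| "Ck_on (Suc k) S f = (f differentiable_on S \<and>
      (\<forall>v. Ck_on k S (\<lambda>x. frechet_derivative f (at x) v)))"

definition smooth_on :: "'a::euclidean_space set \<Rightarrow> ('a \<Rightarrow> 'b::euclidean_space) \<Rightarrow> bool" where
  "smooth_on S f \<longleftrightarrow> (\<forall>k. Ck_on k S f)"

text \<open>M is a smooth embedded submanifold of the euclidean space 'e whose dimension is
DIM('p): locally M is the image of an open subset of 'p under a smooth immersion
which is a homeomorphism onto a relatively open piece of M.\<close>
definition smooth_submanifold :: "'p::euclidean_space itself \<Rightarrow> 'e::euclidean_space set \<Rightarrow> bool" where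
  "smooth_submanifold (_::'p itself) M \<longleftrightarrow>
     (\<forall>p\<in>M. \<exists>(U::'p set) W \<phi> \<psi>. open U \<and> open W \<and> p \<in> W \<and>
        smooth_on U \<phi> \<and> homeomorphism U (M \<inter> W) \<phi> \<psi> \<and>
        (\<forall>x\<in>U. inj (frechet_derivative \<phi> (at x))))"

definition monotonic_on_line :: "'v::real_vector \<Rightarrow> 'v \<Rightarrow> ('v \<Rightarrow> real) \<Rightarrow> bool" where
  "monotonic_on_line w v g \<longleftrightarrow>
     (\<forall>a b::real. a \<le> b \<longrightarrow> g (w + a *\<^sub>R v) \<le> g (w + b *\<^sub>R v)) \<or>
     (\<forall>a b::real. a \<le> b \<longrightarrow> g (w + a *\<^sub>R v) \<ge> g (w + b *\<^sub>R v))"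

definition line :: "'v::real_vector \<Rightarrow> 'v \<Rightarrow> 'v set" where
  "line w v = {w + a *\<^sub>R v | a. True}"

definition IRHS :: "('v::euclidean_space \<times> real) set \<Rightarrow> bool" where
  "IRHS M \<longleftrightarrow>
     M \<subseteq> UNIV \<times> {0..1} \<and>
     smooth_submanifold TYPE('v) M \<and>
     (\<forall>v w. \<exists>g::'v \<Rightarrow> real. (\<forall>x\<in>line w v. g x \<in> {0..1}) \<and>
        M \<inter> (line w v \<times> {0..1}) = {(x, g x) | x. x \<in> line w v} \<and>
        monotonic_on_line w v g)"

end

theory Submission
  imports Defs
begin

text \<open>A function that is monotonic on every line has convex strict sublevel sets with convex
complements. If it is also continuous, each proper sublevel set is therefore an open
halfspace. Take one such halfspace with normal a: a line orthogonal to a lies inside it or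
outside it, and every other proper sublevel set, being nested with it, must then have a
normal orthogonal to that line as well. Hence all sublevel sets, and so f itself, are
invariant under translations orthogonal to a; take H to be the hyperplane orthogonal to a
and u = a.
Continuity of f comes from the manifold charts of its graph via invariance of domain.\<close>

lemma continuous_on_graph_chart:
  fixes \<phi> :: "'v::euclidean_space \<Rightarrow> 'v \<times> real"
  assumes "open U" and "continuous_on U \<phi>" and "inj_on \<phi> U"
    and graph: "\<And>x. x \<in> U \<Longrightarrow> snd (\<phi> x) = f (fst (\<phi> x))"
  shows "open ((fst \<circ> \<phi>) ` U) \<and> continuous_on ((fst \<circ> \<phi>) ` U) f"
proof -
  define h where "h = fst \<circ> \<phi>"
  have ch: "continuous_on U h"
    unfolding h_def by (intro continuous_on_compose assms(2) continuous_on_fst continuous_on_id)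
  have \<phi>_eq: "\<phi> x = (h x, f (h x))" if "x \<in> U" for x
    using graph[OF that] unfolding h_def by (metis comp_apply prod.collapse)
  have injh: "inj_on h U"
  proof (rule inj_onI)
    fix x y assume "x \<in> U" "y \<in> U" "h x = h y"
    then show "x = y" using \<phi>_eq inj_onD[OF assms(3)] by metis
  qed
  have "continuous_on (h ` U) (inv_into U h)"
    by (rule continuous_on_inverse_open[OF assms(1) ch]) (auto simp: injh)
  then have "continuous_on (h ` U) (\<lambda>y. snd (\<phi> (inv_into U h y)))"
    by (intro continuous_on_compose2[OF continuous_on_snd[OF continuous_on_id]]
        continuous_on_compose2[OF assms(2)]) (auto simp: inv_into_into)
  then have "continuous_on (h ` U) f"
  proof (rule continuous_on_cong[THEN iffD1, OF refl, rotated])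
    fix y assume "y \<in> h ` U"
    then have "inv_into U h y \<in> U" and "h (inv_into U h y) = y"
      by (auto simp: inv_into_into f_inv_into_f)
    then show "snd (\<phi> (inv_into U h y)) = f y"
      using \<phi>_eq by (metis snd_conv)
  qed
  then show ?thesis
    using invariance_of_domain[OF ch assms(1) injh] unfolding h_def by blast
qed

lemma IRHS_graph_continuous:
  fixes f :: "'v::euclidean_space \<Rightarrow> real"
  assumes "IRHS M" and M: "M = {(\<theta>, f \<theta>) | \<theta>. True}"
  shows "continuous_on UNIV f"
proof (rule continuous_at_imp_continuous_on, intro ballI)
  fix \<theta> :: 'v
  have \<theta>M: "(\<theta>, f \<theta>) \<in> M" using M by auto
  obtain U :: "'v set" and W \<phi> \<psi> where "open U" and "(\<theta>, f \<theta>) \<in> W"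
      and hom: "homeomorphism U (M \<inter> W) \<phi> \<psi>"
    using assms(1) \<theta>M unfolding IRHS_def smooth_submanifold_def by blast
  have img: "\<phi> ` U = M \<inter> W" and cont: "continuous_on U \<phi>" and inj: "inj_on \<phi> U"
    using hom by (auto simp: homeomorphism_def intro: inj_on_inverseI)
  have graph: "snd (\<phi> x) = f (fst (\<phi> x))" if "x \<in> U" for x
    using img that M by auto
  note U = continuous_on_graph_chart[OF \<open>open U\<close> cont inj graph]
  obtain x where "x \<in> U" "\<phi> x = (\<theta>, f \<theta>)"
    using img \<theta>M \<open>(\<theta>, f \<theta>) \<in> W\<close> by (metis IntI imageE)
  then have "\<theta> \<in> (fst \<circ> \<phi>) ` U"
    by (metis comp_apply fst_conv image_eqI)
  then show "isCont f \<theta>"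
    using continuous_on_eq_continuous_at[THEN iffD1, OF conjunct1[OF U] conjunct2[OF U]] by blast
qed

lemma IRHS_graph_monotonic_on_line:
  fixes f :: "'v::euclidean_space \<Rightarrow> real"
  assumes "IRHS M" and M: "M = {(\<theta>, f \<theta>) | \<theta>. True}"
  shows "monotonic_on_line w v f"
proof -
  obtain g :: "'v \<Rightarrow> real"
    where g: "M \<inter> (line w v \<times> {0..1}) = {(x, g x) | x. x \<in> line w v}"
      and "monotonic_on_line w v g"
    using assms(1) unfolding IRHS_def by blast
  have "M \<subseteq> UNIV \<times> {0..1}" using assms(1) unfolding IRHS_def by blast
  then have "(w + a *\<^sub>R v, f (w + a *\<^sub>R v)) \<in> M \<inter> (line w v \<times> {0..1})" for a
    using M unfolding line_def by blast
  then have "f (w + a *\<^sub>R v) = g (w + a *\<^sub>R v)" for a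
    unfolding g by auto
  then show ?thesis
    using \<open>monotonic_on_line w v g\<close> unfolding monotonic_on_line_def by simp
qed

lemma monotonic_on_line_between:
  fixes f :: "'v::real_vector \<Rightarrow> real"
  assumes "monotonic_on_line x (y - x) f" and "0 \<le> u" "u \<le> 1"
  shows "min (f x) (f y) \<le> f ((1 - u) *\<^sub>R x + u *\<^sub>R y)"
    and "f ((1 - u) *\<^sub>R x + u *\<^sub>R y) \<le> max (f x) (f y)"
proof -
  let ?g = "\<lambda>t. f (x + t *\<^sub>R (y - x))"
  have "(?g 0 \<le> ?g u \<and> ?g u \<le> ?g 1) \<or> (?g 1 \<le> ?g u \<and> ?g u \<le> ?g 0)"
    using assms unfolding monotonic_on_line_def by blast
  moreover have "(1 - u) *\<^sub>R x + u *\<^sub>R y = x + u *\<^sub>R (y - x)"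
    by (simp add: algebra_simps)
  ultimately show "min (f x) (f y) \<le> f ((1 - u) *\<^sub>R x + u *\<^sub>R y)"
    and "f ((1 - u) *\<^sub>R x + u *\<^sub>R y) \<le> max (f x) (f y)"
    by (auto simp: min_le_iff_disj le_max_iff_disj)
qed

lemma
  fixes f :: "'v::real_vector \<Rightarrow> real"
  assumes "\<And>w v. monotonic_on_line w v f"
  shows convex_sublevel_less: "convex {x. f x < c}"
    and convex_superlevel_ge: "convex {x. c \<le> f x}"
proof -
  show "convex {x. f x < c}"
    unfolding convex_alt
  proof (intro ballI allI impI)
    fix x y and u :: real assume "x \<in> {x. f x < c}" "y \<in> {x. f x < c}" "0 \<le> u \<and> u \<le> 1"
    then show "(1 - u) *\<^sub>R x + u *\<^sub>R y \<in> {x. f x < c}"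
      using monotonic_on_line_between(2)[where x=x and y=y and u=u, OF assms] max_less_iff_conj[of "f x" "f y" c]
      by simp
  qed
  show "convex {x. c \<le> f x}"
    unfolding convex_alt
  proof (intro ballI allI impI)
    fix x y and u :: real assume "x \<in> {x. c \<le> f x}" "y \<in> {x. c \<le> f x}" "0 \<le> u \<and> u \<le> 1"
    then show "(1 - u) *\<^sub>R x + u *\<^sub>R y \<in> {x. c \<le> f x}"
      using monotonic_on_line_between(1)[where x=x and y=y and u=u, OF assms] min.bounded_iff[of c "f x" "f y"]
      by simp
  qed
qed

lemma open_convex_co_convex_eq_halfspace:
  fixes S :: "'a::euclidean_space set"
  assumes "open S" "convex S" "convex (- S)" "S \<noteq> {}" "S \<noteq> UNIV"
  shows "\<exists>a b. a \<noteq> 0 \<and> S = {x. a \<bullet> x < b}"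
proof -
  obtain a b where "a \<noteq> 0" and in_S: "\<forall>x\<in>S. a \<bullet> x \<le> b" and out_S: "\<forall>x\<in>- S. b \<le> a \<bullet> x"
    using separating_hyperplane_sets[OF assms(2,3,4)] assms(5) by blast
  have "S \<subseteq> interior {x. a \<bullet> x \<le> b}"
    using in_S assms(1) by (intro interior_maximal) auto
  then have "S \<subseteq> {x. a \<bullet> x < b}"
    using \<open>a \<noteq> 0\<close> by simp
  moreover have "{x. a \<bullet> x < b} \<subseteq> S"
    using out_S by force
  ultimately show ?thesis
    using \<open>a \<noteq> 0\<close> by blast
qed

lemma line_crosses_halfspace:
  fixes a :: "'a::real_inner"
  assumes "a \<bullet> v \<noteq> 0"
  obtains s t where "a \<bullet> (x + s *\<^sub>R v) < b" and "\<not> a \<bullet> (x + t *\<^sub>R v) < b"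
proof
  show "a \<bullet> (x + ((b - 1 - a \<bullet> x) / (a \<bullet> v)) *\<^sub>R v) < b"
    and "\<not> a \<bullet> (x + ((b - a \<bullet> x) / (a \<bullet> v)) *\<^sub>R v) < b"
    using assms by (simp_all add: inner_add_right)
qed

lemma sublevel_eq_halfspace:
  fixes f :: "'v::euclidean_space \<Rightarrow> real"
  assumes "continuous_on UNIV f" and "\<And>w v. monotonic_on_line w v f"
    and "f p < c" and "\<not> f q < c"
  shows "\<exists>a b. a \<noteq> 0 \<and> {x. f x < c} = {x. a \<bullet> x < b}"
proof (rule open_convex_co_convex_eq_halfspace)
  show "open {x. f x < c}"
    using assms(1) by (intro open_Collect_less) (auto intro: continuous_intros)
  have "- {x. f x < c} = {x. c \<le> f x}" by auto
  then show "convex {x. f x < c}" and "convex (- {x. f x < c})"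
    using convex_sublevel_less[OF assms(2)] convex_superlevel_ge[OF assms(2)] by auto
qed (use assms(3,4) in auto)

lemma sublevel_translation_invariant:
  fixes f :: "'v::euclidean_space \<Rightarrow> real"
  assumes "continuous_on UNIV f" and "\<And>w v. monotonic_on_line w v f"
    and "{x. f x < f q} = {x. a \<bullet> x < b}" and "f p < f q"
    and "a \<bullet> v = 0" and "f x < c"
  shows "f (x + v) < c"
proof (rule ccontr)
  assume "\<not> f (x + v) < c"
  then obtain a' b' where "{x. f x < c} = {x. a' \<bullet> x < b'}"
    using sublevel_eq_halfspace[OF assms(1,2)] \<open>f x < c\<close> by blast
  then have Sc: "f y < c \<longleftrightarrow> a' \<bullet> y < b'" for y
    by (simp add: set_eq_iff)
  have S: "f y < f q \<longleftrightarrow> a \<bullet> y < b" for y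
    using assms(3) by (simp add: set_eq_iff)
  have along_a: "a \<bullet> (y + t *\<^sub>R v) = a \<bullet> y" for y and t :: real
    using \<open>a \<bullet> v = 0\<close> by (simp add: inner_add_right)
  have "a' \<bullet> v = 0"
  proof (rule ccontr)
    assume "a' \<bullet> v \<noteq> 0"
    show False
    proof (cases "c \<le> f q")
      case True
      obtain s where "a' \<bullet> (q + s *\<^sub>R v) < b'"
        using line_crosses_halfspace[OF \<open>a' \<bullet> v \<noteq> 0\<close>] by metis
      then have "f (q + s *\<^sub>R v) < f q"
        using Sc True by (meson less_le_trans)
      then show False
        using S[of "q + s *\<^sub>R v"] S[of q] along_a by simp
    next
      case False
      obtain t where "\<not> a' \<bullet> (p + t *\<^sub>R v) < b'"
        using line_crosses_halfspace[OF \<open>a' \<bullet> v \<noteq> 0\<close>] by metis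
      moreover have "f (p + t *\<^sub>R v) < f q"
        using S along_a \<open>f p < f q\<close> by simp
      ultimately show False
        using Sc False by (meson less_trans not_le)
    qed
  qed
  then have "a' \<bullet> (x + v) < b'"
    using Sc \<open>f x < c\<close> by (simp add: inner_add_right)
  then show False
    using Sc \<open>\<not> f (x + v) < c\<close> by simp
qed

lemma exists_invariant_hyperplane:
  fixes f :: "'v::euclidean_space \<Rightarrow> real"
  assumes "continuous_on UNIV f" and "\<And>w v. monotonic_on_line w v f"
  shows "\<exists>a. a \<noteq> 0 \<and> (\<forall>x v. a \<bullet> v = 0 \<longrightarrow> f (x + v) = f x)"
proof (cases "\<exists>p q. f p < f q")
  case True
  then obtain p q where "f p < f q" by blast
  then obtain a b where "a \<noteq> 0" and S: "{x. f x < f q} = {x. a \<bullet> x < b}"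
    using sublevel_eq_halfspace[OF assms] by blast
  have "f (x + v) = f x" if "a \<bullet> v = 0" for x v
  proof -
    have "\<not> f x < f (x + v)"
      using sublevel_translation_invariant[OF assms S \<open>f p < f q\<close> that, of x "f (x + v)"] by blast
    moreover have "\<not> f (x + v) < f x"
      using sublevel_translation_invariant[OF assms S \<open>f p < f q\<close>, of "- v" "x + v" "f x"] that
      by auto
    ultimately show ?thesis by linarith
  qed
  then show ?thesis using \<open>a \<noteq> 0\<close> by blast
next
  case False
  then have "f (x + v) = f x" for x v
    by (meson linorder_neqE_linordered_idom)
  moreover obtain e :: 'v where "e \<in> Basis"
    using nonempty_Basis by blast
  then have "e \<noteq> 0" by (simp add: nonzero_Basis)
  ultimately show ?thesis by blast
qed

theorem theorem2:
  fixes M :: "('v::euclidean_space \<times> real) set" and f :: "'v \<Rightarrow> real"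
  assumes "IRHS M"
    and "M = {(\<theta>, f \<theta>) | \<theta>. True}"
  shows "\<exists>H u. subspace H \<and> dim H = DIM('v) - 1 \<and> u \<notin> H \<and>
           (\<forall>\<mu>::real. \<forall>h\<in>H. f (\<mu> *\<^sub>R u + h) = f (\<mu> *\<^sub>R u)) \<and>
           monotonic_on_line 0 u f"
proof -
  have mono: "\<And>w v. monotonic_on_line w v f"
    using IRHS_graph_monotonic_on_line[OF assms] .
  obtain a where "a \<noteq> 0" and inv: "\<And>x v. a \<bullet> v = 0 \<Longrightarrow> f (x + v) = f x"
    using exists_invariant_hyperplane[OF IRHS_graph_continuous[OF assms] mono] by blast
  show ?thesis
  proof (intro exI conjI)
    show "subspace {x. a \<bullet> x = 0}" by (rule subspace_hyperplane)
    show "dim {x. a \<bullet> x = 0} = DIM('v) - 1" using dim_hyperplane[OF \<open>a \<noteq> 0\<close>] .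
    show "a \<notin> {x. a \<bullet> x = 0}" using \<open>a \<noteq> 0\<close> by simp
    show "\<forall>\<mu>::real. \<forall>h\<in>{x. a \<bullet> x = 0}. f (\<mu> *\<^sub>R a + h) = f (\<mu> *\<^sub>R a)" using inv by blast
    show "monotonic_on_line 0 a f" by (rule mono)
  qed
qed

end
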